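(* Let $M>0$ and assume (Amax) and (Amin). Then the closure $\mathrm{Cl}(\mathcal D(M))$ of $\mathcal D(M)$ in $L^\infty([0,1])$ (supremum norm) is a compact subset of $C^0([0,1])$.
   Context: Fix integers $K\ge1$, $d\ge1$, $\sigma_-\in(0,1)$; $[K']=\{1,\dots,K'\}$; $\Delta_{K'}$ = probability vectors on $[K']$; $\Sigma^{\sigma_-}_{K'}$ = $K'\times K'$ stochastic matrices with all entries $\ge\sigma_-$; $\mathbb R_d[X]$ = real polynomials of degree $\le d$ viewed as functions on $\mathbb R_+$; $\Gamma$ a compact (for pointwise convergence) set of probability densities on $\mathbb R$. $\Theta=\bigcup_{K'=1}^K\{[K']\}\times\Delta_{K'}\times\Sigma^{\sigma_-}_{K'}\times\Gamma^{K'}\times(\mathbb R_d[X])^{K'}$, elements $\theta=(K^\theta,\pi^\theta,Q^\theta,\gamma^\theta,T^\theta)$ with trends $T^\theta_x\in\mathbb R_d[X]$. The true parameter is $\theta^*=(K^*,\pi^*,Q^*,\gamma^*,T^* )\in\Theta$. (Amax): there is a nonincreasing $g:\mathbb R_+\to\mathbb R_+$, $g\to0$ at $\infty$, with $\gamma(z)\le g(|z|)$ for all $\gamma\in\Gamma$. (Amin): there is a nonincreasing $m$ with $\gamma(z)\ge m(|z|)>0$ for all $\gamma\in\Gamma$. Blocks. $x\mathcal R^*x'$ iff $T^*_x-T^*_{x'}$ is constant; $\mathcal B^*=[K^*]/\mathcal R^*$, $\mathbf b^*$ the quotient map; $\mathbb T^*_b=T^*_{\min b}$; $\Delta(x)=T^*_x(1)-\mathbb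 T^*_{\mathbf b^*(x)}(1)$, $\|\Delta\|_\infty=\max_x|\Delta(x)|$. $E(t)=\min_{b\ne b'}|\mathbb T^*_b(t)-\mathbb T^*_{b'}(t)|$ ($+\infty$ if one block), $n_1(M)=\inf\{n:\forall t\ge n,\ E(t)>2M\}$. $\Theta^{OK}_n(M)$ is the set of $\theta\in\Theta$ such that every $x^*\in[K^*]$ has some $x\in[K^\theta]$ with $\sup_{[0,n]}|T^*_{x^*}-T^\theta_x|\le M$, and every $x\in[K^\theta]$ has some $x^*$ with $\sup_{[0,n]}|T^*_{x^*}-T^\theta_x|\le M$. For $n\ge n_1(M+\|\Delta\|_\infty)$ and $\theta\in\Theta^{OK}_n(M)$, $\mathbf b^\theta(x)$ is the unique $b\in\mathcal B^*$ with $\max_{t\in\{1,\dots,n\}}|\mathbb T^*_b(t)-T^\theta_x(t)|\le M+\|\Delta\|_\infty$, and $D^{\theta,n}_x:u\in[0,1]\mapsto T^\theta_x(nu)-\mathbb T^*_{\mathbf b^\theta(x)}(nu)$. Finally $\mathcal D(M)=\bigcup_{n\ge\max(4K(d+1),\,n_1(M+\|\Delta\|_\infty))}\{D^{\theta,n}_x:\theta\in\Theta^{OK}_n(M),x\in[K^\theta]\}$. *)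

theory Defs
  imports "HOL-Analysis.Analysis" "HOL-Computational_Algebra.Polynomial"
begin

text \<open>A parameter theta = (K', pi, Q, gamma, T); states are indexed by 1..K'.\<close>
type_synonym param =
  "nat \<times> (nat \<Rightarrow> real) \<times> (nat \<Rightarrow> nat \<Rightarrow> real) \<times> (nat \<Rightarrow> real \<Rightarrow> real) \<times> (nat \<Rightarrow> real poly)"

definition prob_density :: "(real \<Rightarrow> real) \<Rightarrow> bool" where
  "prob_density g \<longleftrightarrow> g \<in> borel_measurable borel \<and> (\<forall>z. 0 \<le> g z) \<and>
     (\<integral>\<^sup>+ z. ennreal (g z) \<partial>lborel) = 1"

definition prob_vectors :: "nat \<Rightarrow> (nat \<Rightarrow> real) set" where
  "prob_vectors K' = {p. (\<forall>x\<in>{1..K'}. 0 \<le> p x) \<and> (\<Sum>x=1..K'. p x) = 1}"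

definition stoch_matrices :: "real \<Rightarrow> nat \<Rightarrow> (nat \<Rightarrow> nat \<Rightarrow> real) set" where
  "stoch_matrices s K' = {Q. (\<forall>x\<in>{1..K'}. \<forall>y\<in>{1..K'}. s \<le> Q x y) \<and>
                            (\<forall>x\<in>{1..K'}. (\<Sum>y=1..K'. Q x y) = 1)}"

definition Theta :: "nat \<Rightarrow> nat \<Rightarrow> real \<Rightarrow> (real \<Rightarrow> real) set \<Rightarrow> param set" where
  "Theta K d s \<Gamma> = {(K', p, Q, g, T). 1 \<le> K' \<and> K' \<le> K \<and> p \<in> prob_vectors K' \<and>
       Q \<in> stoch_matrices s K' \<and> (\<forall>x\<in>{1..K'}. g x \<in> \<Gamma>) \<and> (\<forall>x\<in>{1..K'}. degree (T x) \<le> d)}"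

text \<open>Blocks of the true trends (Ks = K*, Ts = T*).\<close>
definition blockrel :: "nat \<Rightarrow> (nat \<Rightarrow> real poly) \<Rightarrow> (nat \<times> nat) set" where
  "blockrel Ks Ts = {(x, x'). x \<in> {1..Ks} \<and> x' \<in> {1..Ks} \<and>
       (\<exists>c. \<forall>t\<ge>0. poly (Ts x) t - poly (Ts x') t = c)}"

definition blocks :: "nat \<Rightarrow> (nat \<Rightarrow> real poly) \<Rightarrow> nat set set" where
  "blocks Ks Ts = {1..Ks} // blockrel Ks Ts"

definition bstar :: "nat \<Rightarrow> (nat \<Rightarrow> real poly) \<Rightarrow> nat \<Rightarrow> nat set" where
  "bstar Ks Ts x = blockrel Ks Ts `` {x}"

definition btrend :: "(nat \<Rightarrow> real poly) \<Rightarrow> nat set \<Rightarrow> real poly" where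
  "btrend Ts b = Ts (Min b)"

definition Delta :: "nat \<Rightarrow> (nat \<Rightarrow> real poly) \<Rightarrow> nat \<Rightarrow> real" where
  "Delta Ks Ts x = poly (Ts x) 1 - poly (btrend Ts (bstar Ks Ts x)) 1"

definition Delta_norm :: "nat \<Rightarrow> (nat \<Rightarrow> real poly) \<Rightarrow> real" where
  "Delta_norm Ks Ts = Max ((\<lambda>x. \<bar>Delta Ks Ts x\<bar>) ` {1..Ks})"

definition Egap :: "nat \<Rightarrow> (nat \<Rightarrow> real poly) \<Rightarrow> real \<Rightarrow> ereal" where
  "Egap Ks Ts t = (if \<exists>b\<in>blocks Ks Ts. \<exists>b'\<in>blocks Ks Ts. b \<noteq> b'
     then Min {ereal \<bar>poly (btrend Ts b) t - poly (btrend Ts b') t\<bar> | b b'.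
                 b \<in> blocks Ks Ts \<and> b' \<in> blocks Ks Ts \<and> b \<noteq> b'}
     else \<infinity>)"

definition n1 :: "nat \<Rightarrow> (nat \<Rightarrow> real poly) \<Rightarrow> real \<Rightarrow> nat" where
  "n1 Ks Ts M = Inf {n::nat. \<forall>t\<ge>real n. Egap Ks Ts t > ereal (2 * M)}"

definition ThetaOK :: "nat \<Rightarrow> nat \<Rightarrow> real \<Rightarrow> (real \<Rightarrow> real) set \<Rightarrow> nat \<Rightarrow> (nat \<Rightarrow> real poly)
     \<Rightarrow> nat \<Rightarrow> real \<Rightarrow> param set" where
  "ThetaOK K d s \<Gamma> Ks Ts n M = {\<theta> \<in> Theta K d s \<Gamma>. case \<theta> of (K', p, Q, g, T) \<Rightarrow>
      (\<forall>xs\<in>{1..Ks}. \<exists>x\<in>{1..K'}. \<forall>t\<in>{0..real n}. \<bar>poly (Ts xs) t - poly (T x) t\<bar> \<le> M) \<and>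
      (\<forall>x\<in>{1..K'}. \<exists>xs\<in>{1..Ks}. \<forall>t\<in>{0..real n}. \<bar>poly (Ts xs) t - poly (T x) t\<bar> \<le> M)}"

definition btheta :: "nat \<Rightarrow> (nat \<Rightarrow> real poly) \<Rightarrow> (nat \<Rightarrow> real poly) \<Rightarrow> nat \<Rightarrow> real \<Rightarrow> nat \<Rightarrow> nat set" where
  "btheta Ks Ts T n M x = (THE b. b \<in> blocks Ks Ts \<and>
      Max ((\<lambda>t::nat. \<bar>poly (btrend Ts b) (real t) - poly (T x) (real t)\<bar>) ` {1..n})
        \<le> M + Delta_norm Ks Ts)"

definition Dfun :: "nat \<Rightarrow> (nat \<Rightarrow> real poly) \<Rightarrow> (nat \<Rightarrow> real poly) \<Rightarrow> nat \<Rightarrow> real \<Rightarrow> nat \<Rightarrow> real \<Rightarrow> real" where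
  "Dfun Ks Ts T n M x = restrict (\<lambda>u. poly (T x) (real n * u)
       - poly (btrend Ts (btheta Ks Ts T n M x)) (real n * u)) {0..1}"

definition Dset :: "nat \<Rightarrow> nat \<Rightarrow> real \<Rightarrow> (real \<Rightarrow> real) set \<Rightarrow> nat \<Rightarrow> (nat \<Rightarrow> real poly)
     \<Rightarrow> real \<Rightarrow> (real \<Rightarrow> real) set" where
  "Dset K d s \<Gamma> Ks Ts M = (\<Union>n \<in> {n. max (4 * K * (d + 1)) (n1 Ks Ts (M + Delta_norm Ks Ts)) \<le> n}.
      {Dfun Ks Ts (snd (snd (snd (snd \<theta>)))) n M x | \<theta> x.
         \<theta> \<in> ThetaOK K d s \<Gamma> Ks Ts n M \<and> x \<in> {1..fst \<theta>}})"

abbreviation Linf01 :: "(real \<Rightarrow> real) metric" where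
  "Linf01 \<equiv> funspace {0..1} euclidean_metric"

abbreviation C01 :: "(real \<Rightarrow> real) metric" where
  "C01 \<equiv> cfunspace (top_of_set {0..1}) euclidean_metric"

end

theory Submission
  imports Defs
begin

text \<open>Every element of \<open>D(M)\<close> is the restriction to \<open>[0,1]\<close> of a polynomial of degree at
  most \<open>d\<close> bounded by \<open>B = M + Delta_norm\<close>: beyond \<open>n1\<close> distinct block trends are more than
  \<open>2B\<close> apart, so the block chosen for a fitted trend \<open>T x\<close> is the block of a true state whose
  trend stays within \<open>M\<close> of it on \<open>[0,n]\<close>, and the rescaled difference is then bounded by \<open>B\<close>.
  Lagrange interpolation at the nodes \<open>i/d\<close> places these polynomials inside the continuous
  image of the compact box \<open>[-B,B]\<^sup>d\<^sup>+\<^sup>1\<close> in the sup norm, and the closure of a subset of a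
  compact set of continuous functions is a compact set of continuous functions.\<close>

section \<open>Lagrange interpolation\<close>

definition lagrange_basis :: "(nat \<Rightarrow> 'a::field) \<Rightarrow> nat \<Rightarrow> nat \<Rightarrow> 'a poly" where
  "lagrange_basis x d i = (\<Prod>j\<in>{0..d}-{i}. smult (1 / (x i - x j)) [:- x j, 1:])"

lemma degree_lagrange_basis:
  assumes "i \<le> d"
  shows "degree (lagrange_basis x d i) \<le> d"
proof -
  have "degree (lagrange_basis x d i)
      \<le> sum (degree \<circ> (\<lambda>j. smult (1 / (x i - x j)) [:- x j, 1:])) ({0..d}-{i})"
    unfolding lagrange_basis_def by (rule degree_prod_sum_le) simp
  also have "\<dots> \<le> sum (\<lambda>_. 1) ({0..d}-{i})"
    by (rule sum_mono) (simp add: degree_smult_le)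
  also have "\<dots> \<le> d" using assms by simp
  finally show ?thesis .
qed

lemma poly_lagrange_basis_node:
  assumes "inj_on x {0..d}" "i \<le> d" "k \<le> d"
  shows "poly (lagrange_basis x d i) (x k) = (if i = k then 1 else 0)"
proof (cases "i = k")
  case True
  have "x k - x j \<noteq> 0" if "j \<in> {0..d}-{i}" for j
    using that True assms by (auto dest: inj_onD)
  then show ?thesis
    using True
    by (auto simp: lagrange_basis_def poly_prod diff_divide_distrib[symmetric] intro!: prod.neutral)
next
  case False
  then show ?thesis
    using assms by (auto simp: lagrange_basis_def poly_prod intro!: prod_zero bexI[of _ k])
qed

lemma lagrange_interpolation:
  fixes p :: "'a::field poly"
  assumes x: "inj_on x {0..d}" and p: "degree p \<le> d"
  shows "p = (\<Sum>i\<in>{0..d}. smult (poly p (x i)) (lagrange_basis x d i))"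
proof (rule ccontr)
  define q where "q = p - (\<Sum>i\<in>{0..d}. smult (poly p (x i)) (lagrange_basis x d i))"
  assume "p \<noteq> (\<Sum>i\<in>{0..d}. smult (poly p (x i)) (lagrange_basis x d i))"
  then have q0: "q \<noteq> 0" by (simp add: q_def)
  have "degree (\<Sum>i\<in>{0..d}. smult (poly p (x i)) (lagrange_basis x d i)) \<le> d"
    by (rule degree_sum_le) (auto intro: order.trans[OF degree_smult_le] degree_lagrange_basis)
  then have "degree q \<le> d"
    unfolding q_def using p degree_diff_le by blast
  have "poly q (x k) = 0" if "k \<le> d" for k
  proof -
    have "(\<Sum>i\<in>{0..d}. poly p (x i) * poly (lagrange_basis x d i) (x k))
        = (\<Sum>i\<in>{0..d}. if i = k then poly p (x k) else 0)"
      using that by (intro sum.cong) (auto simp: poly_lagrange_basis_node[OF x])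
    then show ?thesis using that by (simp add: q_def poly_sum)
  qed
  then have "x ` {0..d} \<subseteq> {t. poly q t = 0}" by auto
  then have "card (x ` {0..d}) \<le> card {t. poly q t = 0}"
    by (rule card_mono[OF poly_roots_finite[OF q0]])
  also have "\<dots> \<le> degree q" by (rule card_poly_roots_bound[OF q0])
  finally show False using \<open>degree q \<le> d\<close> card_image[OF x] by simp
qed

section \<open>Polynomials bounded on the unit interval\<close>

lemma restrict_poly_in_C01: "restrict (poly p) {0..1} \<in> mspace C01"
proof -
  have c: "continuous_on {0..1::real} (poly p)" by (intro continuous_intros)
  have "continuous_on {0..1::real} (restrict (poly p) {0..1})"
    by (rule continuous_on_eq[OF c]) simp
  moreover have "bounded (restrict (poly p) {0..1} ` {0..1::real})"
    using compact_imp_bounded[OF compact_continuous_image[OF c compact_Icc]] by simp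
  ultimately show ?thesis by simp
qed

lemma continuous_map_poly_combination_Linf01:
  fixes L :: "nat \<Rightarrow> real poly"
  assumes I: "finite I"
  shows "continuous_map (product_topology (\<lambda>_. euclideanreal) I) (mtopology_of Linf01)
           (\<lambda>y. restrict (poly (\<Sum>i\<in>I. smult (y i) (L i))) {0..1})"
    (is "continuous_map ?X _ ?F")
proof -
  interpret Linf: Metric_space "mspace Linf01" "mdist Linf01" by (rule Metric_space_mspace_mdist)
  have "compact (\<Union>i\<in>I. poly (L i) ` {0..1})"
    using I by (intro compact_UN ballI compact_continuous_image compact_Icc continuous_intros)
  then obtain C where C: "0 < C" and "\<forall>z\<in>(\<Union>i\<in>I. poly (L i) ` {0..1}). norm z \<le> C"
    using compact_imp_bounded bounded_pos by metis
  then have LC: "\<bar>poly (L i) v\<bar> \<le> C" if "i \<in> I" "v \<in> {0..1}" for i v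
    using that by auto
  have FL: "?F y \<in> mspace Linf01" for y
    using restrict_poly_in_C01 cfunspace_subset_funspace by fastforce
  show ?thesis
    unfolding mtopology_of_def Linf.continuous_map_to_metric
  proof (intro ballI allI impI)
    fix x and e :: real assume e: "0 < e"
    define \<delta> where "\<delta> = e / 2 / (card I + 1) / C"
    have \<delta>: "0 < \<delta>" using e C by (simp add: \<delta>_def)
    show "\<exists>U. openin ?X U \<and> x \<in> U \<and> (\<forall>y\<in>U. ?F y \<in> Linf.mball (?F x) e)"
      if "x \<in> topspace ?X"
    proof (intro exI conjI ballI)
      show "openin ?X (PiE I (\<lambda>i. ball (x i) \<delta>))" using I by (simp add: openin_PiE)
      show "x \<in> PiE I (\<lambda>i. ball (x i) \<delta>)" using that \<delta> by (simp add: PiE_iff)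
      fix y assume y: "y \<in> PiE I (\<lambda>i. ball (x i) \<delta>)"
      have "\<bar>?F x v - ?F y v\<bar> \<le> e / 2" if v: "v \<in> {0..1}" for v
      proof -
        have "\<bar>?F x v - ?F y v\<bar> = \<bar>\<Sum>i\<in>I. (x i - y i) * poly (L i) v\<bar>"
          using v by (simp add: poly_sum sum_subtractf[symmetric] algebra_simps)
        also have "\<dots> \<le> (\<Sum>i\<in>I. \<bar>x i - y i\<bar> * \<bar>poly (L i) v\<bar>)"
          unfolding abs_mult[symmetric] by (rule sum_abs)
        also have "\<dots> \<le> (\<Sum>i\<in>I. \<delta> * C)"
          using y LC[OF _ v] by (intro sum_mono mult_mono) (auto simp: PiE_iff dist_real_def)
        also have "\<dots> = real (card I) / (real (card I) + 1) * (e / 2)"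
          using C by (simp add: \<delta>_def)
        also have "\<dots> \<le> e / 2"
          using e by (intro mult_left_le_one_le) auto
        finally show ?thesis .
      qed
      then have "mdist Linf01 (?F x) (?F y) \<le> e / 2"
        by (subst funspace_mdist_le[OF FL FL]) (auto simp: dist_real_def)
      then show "?F y \<in> Linf.mball (?F x) e"
        unfolding Linf.in_mball using e by (intro conjI FL) linarith
    qed
  qed
qed

definition bounded_polys :: "nat \<Rightarrow> real \<Rightarrow> (real \<Rightarrow> real) set" where
  "bounded_polys d B =
     {restrict (poly p) {0..1} | p. degree p \<le> d \<and> (\<forall>u\<in>{0..1}. \<bar>poly p u\<bar> \<le> B)}"

lemma inj_on_uniform_nodes: "inj_on (\<lambda>i. real i / real d) {0..d}"
  by (cases "d = 0") (auto simp: inj_on_def)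

lemma bounded_polys_subset_compactin:
  obtains I where "compactin (mtopology_of Linf01) I" "I \<subseteq> mspace C01" "bounded_polys d B \<subseteq> I"
proof
  let ?x = "\<lambda>i. real i / real d"
  define F where "F y = restrict (poly (\<Sum>i\<in>{0..d}. smult (y i) (lagrange_basis ?x d i))) {0..1}"
    for y :: "nat \<Rightarrow> real"
  have "compactin (product_topology (\<lambda>_. euclideanreal) {0..d}) (PiE {0..d} (\<lambda>_. {-B..B}))"
    by (simp add: compactin_PiE)
  then show "compactin (mtopology_of Linf01) (F ` PiE {0..d} (\<lambda>_. {-B..B}))"
    unfolding F_def by (rule image_compactin[OF _ continuous_map_poly_combination_Linf01]) simp
  show "F ` PiE {0..d} (\<lambda>_. {-B..B}) \<subseteq> mspace C01"
    unfolding F_def using restrict_poly_in_C01 by blast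
  show "bounded_polys d B \<subseteq> F ` PiE {0..d} (\<lambda>_. {-B..B})"
  proof
    fix f assume "f \<in> bounded_polys d B"
    then obtain p where p: "degree p \<le> d" "\<forall>u\<in>{0..1}. \<bar>poly p u\<bar> \<le> B"
      and f: "f = restrict (poly p) {0..1}"
      by (auto simp: bounded_polys_def)
    have "poly p (?x i) \<in> {-B..B}" if "i \<le> d" for i
    proof -
      have "?x i \<in> {0..1}" using that by (auto simp: divide_le_eq_1)
      then have "\<bar>poly p (?x i)\<bar> \<le> B" using p(2) by blast
      then show ?thesis by (auto simp: abs_le_iff)
    qed
    then have "restrict (\<lambda>i. poly p (?x i)) {0..d} \<in> PiE {0..d} (\<lambda>_. {-B..B})"
      by auto
    moreover have "F (restrict (\<lambda>i. poly p (?x i)) {0..d}) = f"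
      using lagrange_interpolation[OF inj_on_uniform_nodes p(1)] by (simp add: F_def f)
    ultimately show "f \<in> F ` PiE {0..d} (\<lambda>_. {-B..B})" by blast
  qed
qed

lemma closure_of_subset_compactin_submetric:
  assumes I: "compactin (mtopology_of m) I" "I \<subseteq> mspace (submetric m A)" and S: "S \<subseteq> I"
  shows "mtopology_of m closure_of S \<subseteq> mspace (submetric m A)"
    and "compactin (mtopology_of (submetric m A)) (mtopology_of m closure_of S)"
proof -
  have "closedin (mtopology_of m) I"
    using I(1)
    by (intro compactin_imp_closedin) (simp add: mtopology_of_def Metric_space.Hausdorff_space_mtopology)
  then have cl: "mtopology_of m closure_of S \<subseteq> I"
    using S by (rule closure_of_minimal[rotated])
  with I(2) show "mtopology_of m closure_of S \<subseteq> mspace (submetric m A)" by blast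
  have "compactin (mtopology_of m) (mtopology_of m closure_of S)"
    using I(1) cl closedin_closure_of by (rule closed_compactin)
  with cl I(2) show "compactin (mtopology_of (submetric m A)) (mtopology_of m closure_of S)"
    by (auto simp: mtopology_of_submetric compactin_subtopology)
qed

section \<open>Blocks of the true trends\<close>

lemma blockrel_equiv: "equiv {1..Ks} (blockrel Ks Ts)"
proof (rule equivI)
  show "blockrel Ks Ts \<subseteq> {1..Ks} \<times> {1..Ks}" "refl_on {1..Ks} (blockrel Ks Ts)"
    by (auto simp: blockrel_def refl_on_def)
  show "sym (blockrel Ks Ts)"
  proof (rule symI)
    fix a b assume "(a, b) \<in> blockrel Ks Ts"
    then obtain c where "a \<in> {1..Ks}" "b \<in> {1..Ks}" "\<forall>t\<ge>0. poly (Ts a) t - poly (Ts b) t = c"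
      by (auto simp: blockrel_def)
    then show "(b, a) \<in> blockrel Ks Ts"
      unfolding blockrel_def by (auto intro!: exI[of _ "- c"])
  qed
  show "trans (blockrel Ks Ts)"
  proof (rule transI)
    fix a b e assume "(a, b) \<in> blockrel Ks Ts" "(b, e) \<in> blockrel Ks Ts"
    then obtain c c' where "a \<in> {1..Ks}" "e \<in> {1..Ks}"
      and "\<forall>t\<ge>0. poly (Ts a) t - poly (Ts b) t = c" "\<forall>t\<ge>0. poly (Ts b) t - poly (Ts e) t = c'"
      by (auto simp: blockrel_def)
    then show "(a, e) \<in> blockrel Ks Ts"
      unfolding blockrel_def by (auto intro!: exI[of _ "c + c'"] simp: algebra_simps)
  qed
qed

lemma finite_blocks: "finite (blocks Ks Ts)"
  unfolding blocks_def by (rule finite_quotient) (auto simp: blockrel_def)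

lemma Min_block_mem:
  assumes "b \<in> blocks Ks Ts"
  shows "Min b \<in> b" "Min b \<in> {1..Ks}"
proof -
  have "b \<subseteq> {1..Ks}" "b \<noteq> {}"
    using assms in_quotient_imp_subset in_quotient_imp_non_empty blockrel_equiv
    unfolding blocks_def by blast+
  then show "Min b \<in> b"
    using finite_subset[of b "{1..Ks}"] Min_in by blast
  with \<open>b \<subseteq> {1..Ks}\<close> show "Min b \<in> {1..Ks}" by blast
qed

lemma bstar_in_blocks: "x \<in> {1..Ks} \<Longrightarrow> bstar Ks Ts x \<in> blocks Ks Ts"
  unfolding bstar_def blocks_def by (rule quotientI)

lemma poly_minus_btrend_bstar:
  assumes x: "x \<in> {1..Ks}" and t: "0 \<le> t"
  shows "poly (Ts x) t - poly (btrend Ts (bstar Ks Ts x)) t = Delta Ks Ts x"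
proof -
  have "(x, Min (bstar Ks Ts x)) \<in> blockrel Ks Ts"
    using Min_block_mem(1)[OF bstar_in_blocks[OF x]] by (simp add: bstar_def)
  then obtain c where "\<forall>t\<ge>0. poly (Ts x) t - poly (Ts (Min (bstar Ks Ts x))) t = c"
    by (auto simp: blockrel_def)
  with t show ?thesis by (simp add: Delta_def btrend_def)
qed

lemma abs_Delta_le_Delta_norm: "x \<in> {1..Ks} \<Longrightarrow> \<bar>Delta Ks Ts x\<bar> \<le> Delta_norm Ks Ts"
  unfolding Delta_norm_def by (rule Max_ge) auto

lemma btrend_diff_nonconst:
  assumes b: "b \<in> blocks Ks Ts" and b': "b' \<in> blocks Ks Ts" and "b \<noteq> b'"
  shows "\<nexists>c. \<forall>t\<ge>0. poly (btrend Ts b - btrend Ts b') t = c"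
proof
  assume "\<exists>c. \<forall>t\<ge>0. poly (btrend Ts b - btrend Ts b') t = c"
  then have "(Min b, Min b') \<in> blockrel Ks Ts"
    using Min_block_mem(2)[OF b] Min_block_mem(2)[OF b'] by (auto simp: blockrel_def btrend_def)
  then have "b = b'"
    using quotient_eq_iff[OF blockrel_equiv] b b' Min_block_mem(1)[OF b] Min_block_mem(1)[OF b']
    unfolding blocks_def by blast
  with \<open>b \<noteq> b'\<close> show False ..
qed

lemma eventually_abs_poly_gt:
  fixes p :: "real poly"
  assumes "\<nexists>c. \<forall>t\<ge>0. poly p t = c"
  shows "\<forall>\<^sub>F t in at_top. C < \<bar>poly p t\<bar>"
proof -
  have "degree p \<noteq> 0"
  proof
    assume "degree p = 0"
    then obtain a where "p = [:a:]" using degree0_coeffs by blast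
    with assms show False by simp
  qed
  then have "filterlim (poly p) at_infinity at_top"
    using filterlim_poly_at_infinity filterlim_mono at_top_le_at_infinity by blast
  then have "\<forall>\<^sub>F t in at_top. max C 0 + 1 \<le> norm (poly p t)"
    using filterlim_at_infinity[of 0 "poly p" at_top] by auto
  then show ?thesis by eventually_elim auto
qed

lemma ereal_less_Egap_iff:
  "ereal c < Egap Ks Ts t \<longleftrightarrow> (\<forall>b\<in>blocks Ks Ts. \<forall>b'\<in>blocks Ks Ts.
      b \<noteq> b' \<longrightarrow> c < \<bar>poly (btrend Ts b) t - poly (btrend Ts b') t\<bar>)"
proof (cases "\<exists>b\<in>blocks Ks Ts. \<exists>b'\<in>blocks Ks Ts. b \<noteq> b'")
  case True
  let ?E = "{ereal \<bar>poly (btrend Ts b) t - poly (btrend Ts b') t\<bar> | b b'.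
              b \<in> blocks Ks Ts \<and> b' \<in> blocks Ks Ts \<and> b \<noteq> b'}"
  have "?E \<subseteq> {ereal \<bar>poly (btrend Ts b) t - poly (btrend Ts b') t\<bar> | b b'.
              b \<in> blocks Ks Ts \<and> b' \<in> blocks Ks Ts}" by blast
  then have "finite ?E"
    by (rule finite_subset) (intro finite_image_set2; simp add: finite_blocks)
  moreover have "?E \<noteq> {}" using True by blast
  ultimately have "ereal c < Min ?E \<longleftrightarrow> (\<forall>e\<in>?E. ereal c < e)"
    by (rule Min_gr_iff)
  moreover have "Egap Ks Ts t = Min ?E"
    unfolding Egap_def by (rule if_P[OF True])
  moreover have "(\<forall>e\<in>?E. ereal c < e) \<longleftrightarrow> (\<forall>b\<in>blocks Ks Ts. \<forall>b'\<in>blocks Ks Ts.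
      b \<noteq> b' \<longrightarrow> ereal c < ereal \<bar>poly (btrend Ts b) t - poly (btrend Ts b') t\<bar>)"
    by blast
  ultimately show ?thesis by simp
qed (auto simp: Egap_def)

lemma ereal_less_Egap_beyond_n1:
  assumes "real (n1 Ks Ts C) \<le> t"
  shows "ereal (2 * C) < Egap Ks Ts t"
proof -
  define S where "S = {n::nat. \<forall>t\<ge>real n. ereal (2 * C) < Egap Ks Ts t}"
  have "\<forall>\<^sub>F t in at_top. b \<noteq> b' \<longrightarrow> 2 * C < \<bar>poly (btrend Ts b) t - poly (btrend Ts b') t\<bar>"
    if "b \<in> blocks Ks Ts" "b' \<in> blocks Ks Ts" for b b'
  proof (cases "b = b'")
    case False
    show ?thesis
      using eventually_abs_poly_gt[OF btrend_diff_nonconst[OF that False], of "2 * C"]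
      by (rule eventually_mono) simp
  qed simp
  then have "\<forall>\<^sub>F t in at_top. \<forall>b\<in>blocks Ks Ts. \<forall>b'\<in>blocks Ks Ts.
          b \<noteq> b' \<longrightarrow> 2 * C < \<bar>poly (btrend Ts b) t - poly (btrend Ts b') t\<bar>"
    by (simp add: eventually_ball_finite_distrib[OF finite_blocks])
  then obtain N :: real where "\<forall>t\<ge>N. ereal (2 * C) < Egap Ks Ts t"
    unfolding eventually_at_top_linorder ereal_less_Egap_iff by blast
  moreover have "N \<le> real (nat \<lceil>N\<rceil>)" by linarith
  ultimately have "nat \<lceil>N\<rceil> \<in> S" unfolding S_def by force
  then have "Inf S \<in> S" using Inf_nat_def1 by blast
  then show ?thesis using assms by (simp add: S_def n1_def)
qed

text \<open>Beyond \<open>n\<^sub>1\<close> distinct block trends differ by more than \<open>2B\<close> at \<open>t = n\<close>, so at most one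
  block stays within \<open>B\<close> of \<open>T x\<close> on \<open>{1..n}\<close>; this keeps the description in \<open>btheta\<close> from
  being ambiguous.\<close>
lemma btheta_eq:
  assumes n: "1 \<le> n" "n1 Ks Ts (M + Delta_norm Ks Ts) \<le> n" and b: "b \<in> blocks Ks Ts"
    and close: "\<And>t. t \<in> {0..real n} \<Longrightarrow>
                  \<bar>poly (btrend Ts b) t - poly (T x) t\<bar> \<le> M + Delta_norm Ks Ts"
  shows "btheta Ks Ts T n M x = b"
  unfolding btheta_def
proof (rule the_equality)
  let ?B = "M + Delta_norm Ks Ts"
  let ?dev = "\<lambda>b. (\<lambda>t::nat. \<bar>poly (btrend Ts b) (real t) - poly (T x) (real t)\<bar>) ` {1..n}"
  have Max_dev_le_iff: "Max (?dev b) \<le> ?B \<longleftrightarrow>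
      (\<forall>t\<in>{1..n}. \<bar>poly (btrend Ts b) (real t) - poly (T x) (real t)\<bar> \<le> ?B)" for b
    using n(1) by (subst Max_le_iff) auto
  show "b \<in> blocks Ks Ts \<and> Max (?dev b) \<le> ?B"
    unfolding Max_dev_le_iff using b close by auto
  fix b' assume b': "b' \<in> blocks Ks Ts \<and> Max (?dev b') \<le> ?B"
  show "b' = b"
  proof (rule ccontr)
    assume "b' \<noteq> b"
    have "\<bar>poly (btrend Ts b') (real n) - poly (T x) (real n)\<bar> \<le> ?B"
      using b' n(1) unfolding Max_dev_le_iff by auto
    moreover have "\<bar>poly (btrend Ts b) (real n) - poly (T x) (real n)\<bar> \<le> ?B"
      using close by simp
    moreover have "2 * ?B < \<bar>poly (btrend Ts b') (real n) - poly (btrend Ts b) (real n)\<bar>"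
      using ereal_less_Egap_beyond_n1[of Ks Ts ?B "real n"] n(2) b b' \<open>b' \<noteq> b\<close>
      by (auto simp: ereal_less_Egap_iff)
    ultimately show False by (smt (verit))
  qed
qed

lemma Dfun_in_bounded_polys:
  assumes Ts: "\<forall>y\<in>{1..Ks}. degree (Ts y) \<le> d"
    and \<theta>: "(K', p, Q, g, T) \<in> ThetaOK K d s \<Gamma> Ks Ts n M" and x: "x \<in> {1..K'}"
    and n: "1 \<le> n" "n1 Ks Ts (M + Delta_norm Ks Ts) \<le> n"
  shows "Dfun Ks Ts T n M x \<in> bounded_polys d (M + Delta_norm Ks Ts)"
proof -
  let ?B = "M + Delta_norm Ks Ts"
  have "\<exists>xs\<in>{1..Ks}. \<forall>t\<in>{0..real n}. \<bar>poly (Ts xs) t - poly (T x) t\<bar> \<le> M"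
    using \<theta> x by (simp add: ThetaOK_def)
  then obtain xs where xs: "xs \<in> {1..Ks}"
    and close: "\<forall>t\<in>{0..real n}. \<bar>poly (Ts xs) t - poly (T x) t\<bar> \<le> M"
    by blast
  define b where "b = bstar Ks Ts xs"
  have b: "b \<in> blocks Ks Ts" unfolding b_def by (rule bstar_in_blocks[OF xs])
  have close_b: "\<bar>poly (btrend Ts b) t - poly (T x) t\<bar> \<le> ?B" if "t \<in> {0..real n}" for t
  proof -
    have "0 \<le> t" "\<bar>poly (Ts xs) t - poly (T x) t\<bar> \<le> M" using close that by auto
    then show ?thesis
      using poly_minus_btrend_bstar[where Ts = Ts, OF xs \<open>0 \<le> t\<close>]
        abs_Delta_le_Delta_norm[where Ts = Ts, OF xs]
      unfolding b_def by arith
  qed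
  define P where "P = pcompose (T x - btrend Ts b) [:0, real n:]"
  have poly_P: "poly P u = poly (T x) (real n * u) - poly (btrend Ts b) (real n * u)" for u
    by (simp add: P_def poly_pcompose mult.commute)
  have "degree (T x) \<le> d" "degree (btrend Ts b) \<le> d"
    using \<theta> x Ts Min_block_mem(2)[OF b] by (auto simp: ThetaOK_def Theta_def btrend_def)
  then have "degree (T x - btrend Ts b) \<le> d" using degree_diff_le by blast
  have "degree P \<le> degree (T x - btrend Ts b) * degree [:0, real n:]"
    unfolding P_def by (rule degree_pcompose_le)
  also have "\<dots> \<le> degree (T x - btrend Ts b)" by simp
  finally have "degree P \<le> d" using \<open>degree (T x - btrend Ts b) \<le> d\<close> by linarith
  moreover have "\<bar>poly P u\<bar> \<le> ?B" if "u \<in> {0..1}" for u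
  proof -
    have "real n * u \<in> {0..real n}"
      using that mult_left_le[of u "real n"] by auto
    from close_b[OF this] show ?thesis by (simp add: poly_P abs_minus_commute)
  qed
  moreover have "btheta Ks Ts T n M x = b"
    using n b close_b by (rule btheta_eq)
  then have "Dfun Ks Ts T n M x = restrict (poly P) {0..1}"
    by (simp add: Dfun_def poly_P[symmetric] restrict_def)
  ultimately show ?thesis unfolding bounded_polys_def by blast
qed

lemma Dset_subset_bounded_polys:
  assumes K: "1 \<le> K" and Ts: "\<forall>y\<in>{1..Ks}. degree (Ts y) \<le> d"
  shows "Dset K d s \<Gamma> Ks Ts M \<subseteq> bounded_polys d (M + Delta_norm Ks Ts)"
proof
  fix f assume "f \<in> Dset K d s \<Gamma> Ks Ts M"
  then obtain n K' p Q g T x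
    where n: "max (4 * K * (d + 1)) (n1 Ks Ts (M + Delta_norm Ks Ts)) \<le> n"
    and "(K', p, Q, g, T) \<in> ThetaOK K d s \<Gamma> Ks Ts n M" "x \<in> {1..K'}"
    and "f = Dfun Ks Ts T n M x"
    unfolding Dset_def by auto
  moreover have "1 \<le> n" using n K by (simp add: max_def split: if_splits)
  ultimately show "f \<in> bounded_polys d (M + Delta_norm Ks Ts)"
    using Dfun_in_bounded_polys[OF Ts] by simp
qed

theorem proposition5:
  fixes K d :: nat and s M :: real and \<Gamma> :: "(real \<Rightarrow> real) set"
    and Ks :: nat and ps :: "nat \<Rightarrow> real" and Qs :: "nat \<Rightarrow> nat \<Rightarrow> real"
    and gs :: "nat \<Rightarrow> real \<Rightarrow> real" and Ts :: "nat \<Rightarrow> real poly"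
  assumes K: "1 \<le> K" and d: "1 \<le> d" and s: "0 < s" "s < 1"
    and dens: "\<forall>g\<in>\<Gamma>. prob_density g"
    and cpt: "compact \<Gamma>"
    and truth: "(Ks, ps, Qs, gs, Ts) \<in> Theta K d s \<Gamma>"
    and Amax: "\<exists>G::real \<Rightarrow> real. (\<forall>a b. 0 \<le> a \<longrightarrow> a \<le> b \<longrightarrow> G b \<le> G a) \<and> (\<forall>a\<ge>0. 0 \<le> G a)
                 \<and> (G \<longlongrightarrow> 0) at_top \<and> (\<forall>g\<in>\<Gamma>. \<forall>z. g z \<le> G \<bar>z\<bar>)"
    and Amin: "\<exists>m::real \<Rightarrow> real. (\<forall>a b. 0 \<le> a \<longrightarrow> a \<le> b \<longrightarrow> m b \<le> m a) \<and> (\<forall>a\<ge>0. 0 < m a)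
                 \<and> (\<forall>g\<in>\<Gamma>. \<forall>z. m \<bar>z\<bar> \<le> g z)"
    and M: "0 < M"
  shows "mtopology_of Linf01 closure_of Dset K d s \<Gamma> Ks Ts M \<subseteq> mspace C01 \<and>
         compactin (mtopology_of C01) (mtopology_of Linf01 closure_of Dset K d s \<Gamma> Ks Ts M)"
proof -
  obtain I where I: "compactin (mtopology_of Linf01) I" "I \<subseteq> mspace C01"
    and polys: "bounded_polys d (M + Delta_norm Ks Ts) \<subseteq> I"
    by (rule bounded_polys_subset_compactin)
  have "\<forall>y\<in>{1..Ks}. degree (Ts y) \<le> d"
    using truth by (simp add: Theta_def)
  then have "Dset K d s \<Gamma> Ks Ts M \<subseteq> I"
    using Dset_subset_bounded_polys[OF K] polys by blast
  moreover have C01: "C01 = submetric Linf01 {f. continuous_map (top_of_set {0..1}) euclideanreal f}"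
    by (simp add: cfunspace_def)
  ultimately show ?thesis
    using closure_of_subset_compactin_submetric[OF I(1) I(2)[unfolded C01]] unfolding C01 by blast
qed

end
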